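(* Let $\mathcal{X}=\{A\in\mathcal{M}_d: A=A^\dagger,\ \operatorname{tr}A=0\}$ as a real vector space, let $\mathcal{V}=\{A\mapsto UAU^\dagger: U\in\mathcal{M}_d\text{ unitary}\}$ regarded as real-linear maps on $\mathcal{X}$, and let $\mathrm{zerospan}_{\mathbb{R}}\mathcal{V}=\{\sum_i\lambda_iV_i:\ V_i\in\mathcal{V},\ \lambda_i\in\mathbb{R},\ \sum_i\lambda_i=0\}$ (finite sums). Then $\mathrm{zerospan}_{\mathbb{R}}\mathcal{V}=\mathcal{B}(\mathcal{X})$, the space of all real-linear maps $\mathcal{X}\to\mathcal{X}$. *)

theory Defs
  imports "HOL-Analysis.Analysis"
begin

definition cdagger :: "complex^'d^'d \<Rightarrow> complex^'d^'d" where
  "cdagger A = (\<chi> i j. cnj (A $ j $ i))"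

definition unitary_mat :: "complex^'d^'d \<Rightarrow> bool" where
  "unitary_mat U \<longleftrightarrow> U ** cdagger U = mat 1 \<and> cdagger U ** U = mat 1"

definition tlherm :: "(complex^'d^'d) set" where
  "tlherm = {A. A = cdagger A \<and> trace A = 0}"

text \<open>B(X): real-linear maps X to X, represented extensionally
  (as functions on all matrices that vanish outside X).\<close>
definition realLinMaps :: "((complex^'d^'d) \<Rightarrow> (complex^'d^'d)) set" where
  "realLinMaps = {L.
     (\<forall>A\<in>tlherm. L A \<in> tlherm) \<and>
     (\<forall>A\<in>tlherm. \<forall>B\<in>tlherm. L (A + B) = L A + L B) \<and>
     (\<forall>c::real. \<forall>A\<in>tlherm. L (c *\<^sub>R A) = c *\<^sub>R L A) \<and>
     (\<forall>A. A \<notin> tlherm \<longrightarrow> L A = 0)}"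

definition zerospanConj :: "((complex^'d^'d) \<Rightarrow> (complex^'d^'d)) set" where
  "zerospanConj = {(\<lambda>A. if A \<in> tlherm
        then (\<Sum>i<n. lam i *\<^sub>R (U i ** A ** cdagger (U i))) else 0)
      | n (lam :: nat \<Rightarrow> real) U.
        (\<forall>i<n. unitary_mat (U i)) \<and> (\<Sum>i<n. lam i) = 0}"

end

theory Submission
  imports Defs
begin

text \<open>The zero-sum combinations of conjugations form a real subspace of \<open>B(X)\<close> that is stable
  under composing, on either side, with a unitary conjugation. Averaging the conjugations by the
  sign changes of two coordinates \<open>a\<close>, \<open>b\<close> and by their transposition, weighted by a nontrivial
  character of the sign group, yields the single rank-one map \<open>A \<mapsto> Re A\<^sub>a\<^sub>b \<sigma>\<^sub>x\<close>. Diagonal phases,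
  coordinate transpositions and a Hadamard rotation in the \<open>(a,b)\<close>-plane carry it to \<open>A \<mapsto> \<phi>(A) P\<close>
  for every Pauli coordinate functional \<open>\<phi>\<close> and every Pauli matrix \<open>P\<close>. These span all rank-one
  maps on \<open>X\<close>, hence all of \<open>B(X)\<close>; the reverse inclusion just says conjugation preserves \<open>X\<close>.\<close>

lemma cdagger_nth [simp]: "cdagger A $ i $ j = cnj (A $ j $ i)"
  by (simp add: cdagger_def)

lemma cdagger_cdagger [simp]: "cdagger (cdagger A) = A"
  by (simp add: vec_eq_iff)

lemma cdagger_add: "cdagger (A + B) = cdagger A + cdagger B"
  by (simp add: vec_eq_iff)

lemma cdagger_scaleR: "cdagger (c *\<^sub>R A) = c *\<^sub>R cdagger A"
  by (simp add: vec_eq_iff)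

lemma cdagger_mult: "cdagger (A ** B) = cdagger B ** (cdagger A :: complex^'d^'d)"
  by (simp add: matrix_matrix_mult_def vec_eq_iff mult.commute)

lemma matrix_add_rdistrib: "(B + C) ** A = B ** A + C ** A"
  by (vector matrix_matrix_mult_def sum.distrib[symmetric] field_simps)

lemma matrix_mult_sum_left:
  "finite I \<Longrightarrow> (W::'a::semiring_1^'n^'n) ** sum f I = (\<Sum>i\<in>I. W ** f i)"
  by (induction I rule: finite_induct) (simp_all add: matrix_add_ldistrib)

lemma matrix_mult_sum_right:
  "finite I \<Longrightarrow> sum f I ** (W::'a::semiring_1^'n^'n) = (\<Sum>i\<in>I. f i ** W)"
  by (induction I rule: finite_induct) (simp_all add: matrix_add_rdistrib)

lemma matrix_conj_nth:
  "(U ** A ** cdagger U) $ i $ j = (\<Sum>k\<in>UNIV. \<Sum>l\<in>UNIV. U$i$k * A$k$l * cnj (U$j$l))"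
  by (simp add: matrix_matrix_mult_def sum_distrib_left sum_distrib_right mult.assoc)
     (rule sum.swap)

lemma unitary_mat_mult: "unitary_mat U \<Longrightarrow> unitary_mat W \<Longrightarrow> unitary_mat (U ** W)"
  unfolding unitary_mat_def cdagger_mult by (metis matrix_mul_assoc matrix_mul_lid)

lemma tlherm_nth_cnj: "A \<in> tlherm \<Longrightarrow> A $ i $ j = cnj (A $ j $ i)"
  unfolding tlherm_def by (metis (mono_tags) cdagger_nth mem_Collect_eq)

lemma tlherm_zero: "0 \<in> tlherm"
  by (simp add: tlherm_def vec_eq_iff trace_def)

lemma tlherm_add: "A \<in> tlherm \<Longrightarrow> B \<in> tlherm \<Longrightarrow> A + B \<in> tlherm"
  by (simp add: tlherm_def cdagger_add trace_add)

lemma tlherm_scaleR: "A \<in> tlherm \<Longrightarrow> c *\<^sub>R A \<in> tlherm"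
  by (simp add: tlherm_def cdagger_scaleR trace_def scaleR_sum_right[symmetric])

lemma tlherm_sum: "finite I \<Longrightarrow> (\<And>i. i \<in> I \<Longrightarrow> f i \<in> tlherm) \<Longrightarrow> sum f I \<in> tlherm"
  by (induction I rule: finite_induct) (auto intro: tlherm_add tlherm_zero)

lemma tlherm_unitary_conj:
  assumes U: "unitary_mat U" and A: "A \<in> tlherm"
  shows "U ** A ** cdagger U \<in> tlherm"
proof -
  have herm: "A = cdagger A" and tr: "trace A = 0" using A by (auto simp: tlherm_def)
  have "trace (U ** A ** cdagger U) = trace (cdagger U ** (U ** A))"
    by (rule trace_mul_sym)
  also have "\<dots> = trace A" using U by (simp add: matrix_mul_assoc unitary_mat_def)
  finally show ?thesis
    using herm tr by (simp add: tlherm_def cdagger_mult matrix_mul_assoc)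
qed

lemma realLinMaps_tlherm: "L \<in> realLinMaps \<Longrightarrow> A \<in> tlherm \<Longrightarrow> L A \<in> tlherm"
  and realLinMaps_add:
    "L \<in> realLinMaps \<Longrightarrow> A \<in> tlherm \<Longrightarrow> B \<in> tlherm \<Longrightarrow> L (A + B) = L A + L B"
  and realLinMaps_scaleR: "L \<in> realLinMaps \<Longrightarrow> A \<in> tlherm \<Longrightarrow> L (c *\<^sub>R A) = c *\<^sub>R L A"
  and realLinMaps_outside: "L \<in> realLinMaps \<Longrightarrow> A \<notin> tlherm \<Longrightarrow> L A = 0"
  unfolding realLinMaps_def by blast+

lemma realLinMaps_sum:
  assumes L: "L \<in> realLinMaps"
  shows "finite I \<Longrightarrow> (\<And>i. i \<in> I \<Longrightarrow> B i \<in> tlherm) \<Longrightarrow> L (sum B I) = (\<Sum>i\<in>I. L (B i))"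
proof (induction I rule: finite_induct)
  case empty
  show ?case using realLinMaps_scaleR[OF L tlherm_zero, of 0] by simp
next
  case (insert x F)
  then show ?case by (simp add: realLinMaps_add[OF L] tlherm_sum)
qed

lemma zerospanConj_subset_realLinMaps: "zerospanConj \<subseteq> realLinMaps"
proof
  fix L :: "complex^'d^'d \<Rightarrow> complex^'d^'d"
  assume "L \<in> zerospanConj"
  then obtain n :: nat and lam :: "nat \<Rightarrow> real" and U where U: "\<forall>i<n. unitary_mat (U i)" and L: "L = (\<lambda>A. if A \<in> tlherm
        then (\<Sum>i<n. lam i *\<^sub>R (U i ** A ** cdagger (U i))) else 0)"
    unfolding zerospanConj_def by blast
  show "L \<in> realLinMaps" unfolding realLinMaps_def
  proof (intro CollectI conjI ballI allI impI)
    fix A :: "complex^'d^'d" assume "A \<in> tlherm" then show "L A \<in> tlherm"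
      using U by (auto simp: L intro!: tlherm_sum tlherm_scaleR tlherm_unitary_conj)
  next
    fix A B :: "complex^'d^'d" assume "A \<in> tlherm" "B \<in> tlherm"
    then show "L (A + B) = L A + L B"
      by (simp add: L tlherm_add matrix_add_ldistrib matrix_add_rdistrib scaleR_add_right
          sum.distrib)
  next
    fix c :: real and A :: "complex^'d^'d" assume "A \<in> tlherm"
    then show "L (c *\<^sub>R A) = c *\<^sub>R L A"
      by (simp add: L tlherm_scaleR matrix_scalar_ac scalar_matrix_assoc[symmetric]
          scaleR_sum_right mult.commute)
  qed (simp add: L)
qed

lemma zerospanConjI:
  fixes n :: nat and lam :: "nat \<Rightarrow> real"
  assumes "\<forall>i<n. unitary_mat (U i)" "(\<Sum>i<n. lam i) = 0"
    and "\<And>A. A \<in> tlherm \<Longrightarrow> f A = (\<Sum>i<n. lam i *\<^sub>R (U i ** A ** cdagger (U i)))"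
    and "\<And>A. A \<notin> tlherm \<Longrightarrow> f A = 0"
  shows "f \<in> zerospanConj"
proof -
  have "f = (\<lambda>A. if A \<in> tlherm then (\<Sum>i<n. lam i *\<^sub>R (U i ** A ** cdagger (U i))) else 0)"
    using assms(3,4) by auto
  then show ?thesis using assms(1,2) unfolding zerospanConj_def by blast
qed

lemma zerospanConjE:
  assumes "f \<in> zerospanConj"
  obtains n :: nat and U and lam :: "nat \<Rightarrow> real" where "\<forall>i<n. unitary_mat (U i)" "(\<Sum>i<n. lam i) = 0"
    "\<And>A. A \<in> tlherm \<Longrightarrow> f A = (\<Sum>i<n. lam i *\<^sub>R (U i ** A ** cdagger (U i)))"
    "\<And>A. A \<notin> tlherm \<Longrightarrow> f A = 0"
  using assms unfolding zerospanConj_def by fastforce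

lemma zerospanConj_zero: "(\<lambda>A. 0) \<in> zerospanConj"
  by (rule zerospanConjI[where n=0]) auto

lemma sum_lessThan_add_nat:
  "(\<Sum>i<m + n. h i) = (\<Sum>i<m. h i) + (\<Sum>i<n. h (m + i))" for h :: "nat \<Rightarrow> 'a::comm_monoid_add"
  by (induction n) (simp_all add: add.assoc)

lemma zerospanConj_add:
  assumes "f \<in> zerospanConj" "g \<in> zerospanConj"
  shows "(\<lambda>A. f A + g A) \<in> zerospanConj"
proof -
  obtain m and lam :: "nat \<Rightarrow> real" and U where f: "\<forall>i<m. unitary_mat (U i)" "(\<Sum>i<m. lam i) = 0"
    "\<And>A. A \<in> tlherm \<Longrightarrow> f A = (\<Sum>i<m. lam i *\<^sub>R (U i ** A ** cdagger (U i)))"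
    "\<And>A. A \<notin> tlherm \<Longrightarrow> f A = 0" using assms(1) by (rule zerospanConjE) (rule that)
  obtain n and mu :: "nat \<Rightarrow> real" and V where g: "\<forall>i<n. unitary_mat (V i)" "(\<Sum>i<n. mu i) = 0"
    "\<And>A. A \<in> tlherm \<Longrightarrow> g A = (\<Sum>i<n. mu i *\<^sub>R (V i ** A ** cdagger (V i)))"
    "\<And>A. A \<notin> tlherm \<Longrightarrow> g A = 0" using assms(2) by (rule zerospanConjE) (rule that)
  show ?thesis
  proof (rule zerospanConjI[where n="m + n"
        and lam="\<lambda>i. if i < m then lam i else mu (i - m)"
        and U="\<lambda>i. if i < m then U i else V (i - m)"])
    show "\<forall>i<m + n. unitary_mat (if i < m then U i else V (i - m))"
      using f(1) g(1) by auto
  qed (use f g in \<open>simp_all add: sum_lessThan_add_nat\<close>)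
qed

lemma zerospanConj_scaleR:
  assumes "f \<in> zerospanConj"
  shows "(\<lambda>A. c *\<^sub>R f A) \<in> zerospanConj"
proof -
  obtain n and lam :: "nat \<Rightarrow> real" and U where f: "\<forall>i<n. unitary_mat (U i)" "(\<Sum>i<n. lam i) = 0"
    "\<And>A. A \<in> tlherm \<Longrightarrow> f A = (\<Sum>i<n. lam i *\<^sub>R (U i ** A ** cdagger (U i)))"
    "\<And>A. A \<notin> tlherm \<Longrightarrow> f A = 0" using assms by (rule zerospanConjE) (rule that)
  show ?thesis
    by (rule zerospanConjI[where n=n and lam="\<lambda>i. c * lam i" and U=U])
      (use f in \<open>simp_all add: sum_distrib_left[symmetric] scaleR_sum_right\<close>)
qed

lemma zerospanConj_sum:
  "finite I \<Longrightarrow> (\<And>i. i \<in> I \<Longrightarrow> f i \<in> zerospanConj) \<Longrightarrow> (\<lambda>A. \<Sum>i\<in>I. f i A) \<in> zerospanConj"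
  by (induction I rule: finite_induct) (simp_all add: zerospanConj_zero zerospanConj_add)

lemma zerospanConj_conj_left:
  assumes "f \<in> zerospanConj" "unitary_mat W"
  shows "(\<lambda>A. W ** f A ** cdagger W) \<in> zerospanConj"
proof -
  obtain n and lam :: "nat \<Rightarrow> real" and U where f: "\<forall>i<n. unitary_mat (U i)" "(\<Sum>i<n. lam i) = 0"
    "\<And>A. A \<in> tlherm \<Longrightarrow> f A = (\<Sum>i<n. lam i *\<^sub>R (U i ** A ** cdagger (U i)))"
    "\<And>A. A \<notin> tlherm \<Longrightarrow> f A = 0" using assms(1) by (rule zerospanConjE) (rule that)
  show ?thesis
  proof (rule zerospanConjI[where n=n and lam=lam and U="\<lambda>i. W ** U i"])
    show "\<forall>i<n. unitary_mat (W ** U i)" using f(1) assms(2) by (auto intro: unitary_mat_mult)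
  qed (use f in \<open>simp_all add: matrix_mult_sum_left matrix_mult_sum_right matrix_scalar_ac
      scalar_matrix_assoc[symmetric] cdagger_mult matrix_mul_assoc\<close>)
qed

lemma zerospanConj_conj_right:
  assumes "f \<in> zerospanConj" "unitary_mat W"
  shows "(\<lambda>A. if A \<in> tlherm then f (W ** A ** cdagger W) else 0) \<in> zerospanConj"
proof -
  obtain n and lam :: "nat \<Rightarrow> real" and U where f: "\<forall>i<n. unitary_mat (U i)" "(\<Sum>i<n. lam i) = 0"
    "\<And>A. A \<in> tlherm \<Longrightarrow> f A = (\<Sum>i<n. lam i *\<^sub>R (U i ** A ** cdagger (U i)))"
    "\<And>A. A \<notin> tlherm \<Longrightarrow> f A = 0" using assms(1) by (rule zerospanConjE) (rule that)
  show ?thesis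
  proof (rule zerospanConjI[where n=n and lam=lam and U="\<lambda>i. U i ** W"])
    show "\<forall>i<n. unitary_mat (U i ** W)" using f(1) assms(2) by (auto intro: unitary_mat_mult)
  qed (use f tlherm_unitary_conj[OF assms(2)] in \<open>simp_all add: cdagger_mult matrix_mul_assoc\<close>)
qed

definition rank_one_map ::
    "(complex^'d^'d \<Rightarrow> real) \<Rightarrow> complex^'d^'d \<Rightarrow> complex^'d^'d \<Rightarrow> complex^'d^'d" where
  "rank_one_map \<phi> B = (\<lambda>A. if A \<in> tlherm then \<phi> A *\<^sub>R B else 0)"

lemma rank_one_map_cong:
  "(\<And>A. A \<in> tlherm \<Longrightarrow> \<phi> A = \<psi> A) \<Longrightarrow> rank_one_map \<phi> B = rank_one_map \<psi> B"
  by (auto simp: rank_one_map_def fun_eq_iff)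

lemma rank_one_map_zero: "rank_one_map \<phi> 0 = (\<lambda>A. 0)"
  by (auto simp: rank_one_map_def fun_eq_iff)

lemma rank_one_map_add: "rank_one_map \<phi> (B + C) = (\<lambda>A. rank_one_map \<phi> B A + rank_one_map \<phi> C A)"
  by (auto simp: rank_one_map_def fun_eq_iff scaleR_add_right)

lemma rank_one_map_sum: "rank_one_map \<phi> (\<Sum>i\<in>I. B i) = (\<lambda>A. \<Sum>i\<in>I. rank_one_map \<phi> (B i) A)"
  by (auto simp: rank_one_map_def fun_eq_iff scaleR_sum_right)

lemma rank_one_map_scaleR_left: "rank_one_map (\<lambda>A. c * \<phi> A) B = (\<lambda>A. c *\<^sub>R rank_one_map \<phi> B A)"
  and rank_one_map_scaleR_right: "rank_one_map \<phi> (c *\<^sub>R B) = (\<lambda>A. c *\<^sub>R rank_one_map \<phi> B A)"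
  by (auto simp: rank_one_map_def fun_eq_iff)

lemma rank_one_map_conj_left:
  assumes "rank_one_map \<phi> B \<in> zerospanConj" "unitary_mat W"
  shows "rank_one_map \<phi> (W ** B ** cdagger W) \<in> zerospanConj"
proof -
  have "rank_one_map \<phi> (W ** B ** cdagger W) = (\<lambda>A. W ** rank_one_map \<phi> B A ** cdagger W)"
    by (auto simp: rank_one_map_def fun_eq_iff matrix_scalar_ac scalar_matrix_assoc[symmetric])
  then show ?thesis using zerospanConj_conj_left[OF assms] by simp
qed

lemma rank_one_map_conj_right:
  assumes "rank_one_map \<phi> B \<in> zerospanConj" "unitary_mat W"
  shows "rank_one_map (\<lambda>A. \<phi> (W ** A ** cdagger W)) B \<in> zerospanConj"
proof -
  have "rank_one_map (\<lambda>A. \<phi> (W ** A ** cdagger W)) B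
      = (\<lambda>A. if A \<in> tlherm then rank_one_map \<phi> B (W ** A ** cdagger W) else 0)"
    using tlherm_unitary_conj[OF assms(2)] by (auto simp: rank_one_map_def fun_eq_iff)
  then show ?thesis using zerospanConj_conj_right[OF assms] by simp
qed

definition monomial_mat :: "('d \<Rightarrow> 'd) \<Rightarrow> ('d \<Rightarrow> complex) \<Rightarrow> complex^'d^'d" where
  "monomial_mat t f = (\<chi> i j. if i = t j then f j else 0)"

lemma sum_delta_mult_delta:
  "(\<Sum>k\<in>UNIV. \<Sum>l\<in>UNIV. (if k = p then c else 0) * A k l * cnj (if l = q then d else 0))
    = c * A p q * cnj (d::complex)"
  for A :: "'d::finite \<Rightarrow> 'd \<Rightarrow> complex"
proof -
  have "(\<Sum>k\<in>UNIV. \<Sum>l\<in>UNIV. (if k = p then c else 0) * A k l * cnj (if l = q then d else 0))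
      = (\<Sum>l\<in>UNIV. c * A p l * cnj (if l = q then d else 0))"
    by (simp add: if_distrib if_distribR sum.If_cases)
  also have "\<dots> = c * A p q * cnj d"
    by (simp add: if_distrib sum.If_cases)
  finally show ?thesis .
qed

lemma monomial_mat_conj:
  assumes t: "\<And>x. t (t x) = x"
  shows "monomial_mat t f ** A ** cdagger (monomial_mat t f)
      = (\<chi> i j. f (t i) * A$(t i)$(t j) * cnj (f (t j)))"
proof -
  have entry: "(if i = t k then f k else 0) = (if k = t i then f (t i) else 0)" for i k
    using t by auto
  show ?thesis
    unfolding vec_eq_iff matrix_conj_nth monomial_mat_def vec_lambda_beta entry
      sum_delta_mult_delta
    by simp
qed

lemma unitary_monomial_mat:
  assumes t: "\<And>x. t (t x) = x" and f: "\<And>x. f x * cnj (f x) = 1"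
  shows "unitary_mat (monomial_mat t f)"
proof -
  have entry: "(if i = t k then f k else 0) = (if k = t i then f (t i) else 0)" for i k
    using t by auto
  have t_inj: "(t i = t j) \<longleftrightarrow> (i = j)" for i j by (metis t)
  have f': "cnj (f x) * f x = 1" for x using f[of x] by (simp add: mult.commute)
  have "monomial_mat t f ** cdagger (monomial_mat t f) = mat 1"
    unfolding vec_eq_iff matrix_matrix_mult_def monomial_mat_def mat_def cdagger_nth
      vec_lambda_beta entry
    by (simp add: if_distrib if_distribR sum.If_cases t_inj f)
  moreover have "cdagger (monomial_mat t f) ** monomial_mat t f = mat 1"
    unfolding vec_eq_iff matrix_matrix_mult_def monomial_mat_def mat_def cdagger_nth
      vec_lambda_beta
    by (simp add: if_distrib if_distribR sum.If_cases f' t_inj)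
  ultimately show ?thesis unfolding unitary_mat_def by simp
qed

text \<open>The Pauli matrices acting on the coordinates \<open>a\<close>, \<open>b\<close>; \<open>pauli_y\<close> carries the opposite of the
  usual sign.\<close>

definition pauli_x :: "'d \<Rightarrow> 'd \<Rightarrow> complex^'d^'d" where
  "pauli_x a b = (\<chi> i j. if (i = a \<and> j = b) \<or> (i = b \<and> j = a) then 1 else 0)"

definition pauli_y :: "'d \<Rightarrow> 'd \<Rightarrow> complex^'d^'d" where
  "pauli_y a b = (\<chi> i j. if i = a \<and> j = b then \<i> else if i = b \<and> j = a then -\<i> else 0)"

definition pauli_z :: "'d \<Rightarrow> 'd \<Rightarrow> complex^'d^'d" where
  "pauli_z a b = (\<chi> i j. if i = j \<and> i = a then 1 else if i = j \<and> i = b then -1 else 0)"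

lemma pauli_x_tlherm: "a \<noteq> b \<Longrightarrow> pauli_x a b \<in> tlherm"
  by (auto simp: tlherm_def pauli_x_def vec_eq_iff trace_def intro!: sum.neutral)

lemma pauli_y_tlherm: "a \<noteq> b \<Longrightarrow> pauli_y a b \<in> tlherm"
  by (auto simp: tlherm_def pauli_y_def vec_eq_iff trace_def intro!: sum.neutral)

lemma pauli_z_tlherm:
  fixes a b :: "'d::finite"
  assumes "a \<noteq> b"
  shows "pauli_z a b \<in> tlherm"
proof -
  have "trace (pauli_z a b) = (\<Sum>i\<in>UNIV. (if i = a then 1 else 0) - (if i = b then 1 else 0))"
    unfolding trace_def using assms by (intro sum.cong) (auto simp: pauli_z_def)
  also have "\<dots> = 0" by (simp add: sum_subtractf)
  finally show ?thesis using assms by (auto simp: tlherm_def pauli_z_def vec_eq_iff)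
qed

lemma sum_lessThan_8:
  "(\<Sum>i<(8::nat). g i) = g 0 + g 1 + g 2 + g 3 + g 4 + g 5 + g 6 + (g 7 :: 'a::comm_monoid_add)"
  by (simp add: numeral_eq_Suc lessThan_Suc add_ac)

text \<open>Average the conjugates of \<open>A\<close> by the sign changes of \<open>a\<close>, \<open>b\<close> and by the transposition of
  \<open>a\<close>, \<open>b\<close>, weighted by the character \<open>s\<^sub>a s\<^sub>b\<close> of the sign group. The character kills every
  entry except \<open>A\<^sub>a\<^sub>b\<close> and \<open>A\<^sub>b\<^sub>a\<close>, the transposition symmetrizes them, and the weights sum
  to zero because the character is nontrivial.\<close>

lemma rank_one_re_pauli_x:
  fixes a b :: "'d::finite"
  assumes ab: "a \<noteq> b"
  shows "rank_one_map (\<lambda>A. Re (A$a$b)) (pauli_x a b) \<in> zerospanConj"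
proof -
  define sgn :: "'d set \<Rightarrow> 'd \<Rightarrow> complex" where "sgn S x = (if x \<in> S then -1 else 1)" for S x
  define \<tau> where "\<tau> = Transposition.transpose a b"
  define Us where "Us = [monomial_mat id (sgn {}), monomial_mat id (sgn {a}),
     monomial_mat id (sgn {b}), monomial_mat id (sgn {a,b}),
     monomial_mat \<tau> (sgn {}), monomial_mat \<tau> (sgn {a}),
     monomial_mat \<tau> (sgn {b}), monomial_mat \<tau> (sgn {a,b})]"
  define ws :: "real list" where "ws = [1, -1, -1, 1, 1, -1, -1, 1]"
  show ?thesis
  proof (rule zerospanConjI[where n=8 and lam="\<lambda>i. ws ! i / 8" and U="\<lambda>i. Us ! i"])
    have "unitary_mat (monomial_mat t (sgn S))" if "t = id \<or> t = \<tau>" for t S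
      using that by (auto simp: \<tau>_def sgn_def intro!: unitary_monomial_mat)
    then show "\<forall>i<8. unitary_mat (Us ! i)"
      by (auto simp: Us_def less_Suc_eq numeral_eq_Suc)
    show "(\<Sum>i<8. ws ! i / 8) = 0" by (simp add: sum_lessThan_8 ws_def)
    fix A :: "complex^'d^'d"
    assume A: "A \<in> tlherm"
    have "A$b$a = cnj (A$a$b)" by (rule tlherm_nth_cnj[OF A])
    then show "rank_one_map (\<lambda>A. Re (A$a$b)) (pauli_x a b) A
        = (\<Sum>i<8. (ws ! i / 8) *\<^sub>R (Us ! i ** A ** cdagger (Us ! i)))"
      unfolding sum_lessThan_8
      apply (simp add: Us_def ws_def monomial_mat_conj \<tau>_def rank_one_map_def A)
      apply (simp add: vec_eq_iff pauli_x_def Transposition.transpose_def sgn_def ab)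
      apply (simp add: complex_eq_iff scaleR_conv_of_real ab[symmetric])
      done
  qed (simp add: rank_one_map_def)
qed

lemma rank_one_pauli_x_transpose:
  assumes "rank_one_map \<phi> (pauli_x a b) \<in> zerospanConj"
  shows "rank_one_map \<phi> (pauli_x (Transposition.transpose p q a) (Transposition.transpose p q b))
    \<in> zerospanConj"
proof -
  let ?P = "monomial_mat (Transposition.transpose p q) (\<lambda>_. 1)"
  have "?P ** pauli_x a b ** cdagger ?P
      = pauli_x (Transposition.transpose p q a) (Transposition.transpose p q b)"
    by (auto simp: monomial_mat_conj pauli_x_def vec_eq_iff Transposition.transpose_def)
  moreover have "unitary_mat ?P" by (rule unitary_monomial_mat) auto
  ultimately show ?thesis using rank_one_map_conj_left[OF assms] by metis
qed

lemma rank_one_pauli_x_move: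
  assumes "rank_one_map \<phi> (pauli_x a b) \<in> zerospanConj" "a \<noteq> b" "c \<noteq> d"
  shows "rank_one_map \<phi> (pauli_x c d) \<in> zerospanConj"
proof -
  define b' where "b' = Transposition.transpose a c b"
  have "rank_one_map \<phi> (pauli_x c b') \<in> zerospanConj"
    using rank_one_pauli_x_transpose[OF assms(1), of a c] by (simp add: b'_def)
  moreover have "c \<noteq> b'" using assms(2) by (auto simp: b'_def Transposition.transpose_def)
  ultimately show ?thesis
    using rank_one_pauli_x_transpose[of \<phi> c b' b' d] assms(3)
    by (simp add: Transposition.transpose_def)
qed

lemma unitary_phase_mat: "z * cnj z = 1 \<Longrightarrow> unitary_mat (monomial_mat id (\<lambda>x. if x = c then z else 1))"
  by (rule unitary_monomial_mat) auto

lemma rank_one_pauli_y: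
  assumes "rank_one_map \<phi> (pauli_x a b) \<in> zerospanConj" "a \<noteq> b"
  shows "rank_one_map \<phi> (pauli_y a b) \<in> zerospanConj"
proof -
  let ?P = "monomial_mat id (\<lambda>x. if x = a then \<i> else 1)"
  have "?P ** pauli_x a b ** cdagger ?P = pauli_y a b"
    using assms(2) by (auto simp: monomial_mat_conj pauli_x_def pauli_y_def vec_eq_iff)
  then show ?thesis using rank_one_map_conj_left[OF assms(1) unitary_phase_mat[of \<i> a]] by simp
qed

lemma rank_one_im_functional:
  assumes "rank_one_map (\<lambda>A. Re (A$a$b)) B \<in> zerospanConj" "a \<noteq> b"
  shows "rank_one_map (\<lambda>A. Im (A$a$b)) B \<in> zerospanConj"
proof -
  let ?P = "monomial_mat id (\<lambda>x. if x = a then -\<i> else 1)"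
  have "(\<lambda>A. Re ((?P ** A ** cdagger ?P)$a$b)) = (\<lambda>A. Im (A$a$b))"
    using assms(2) by (auto simp: monomial_mat_conj fun_eq_iff)
  then show ?thesis using rank_one_map_conj_right[OF assms(1) unitary_phase_mat[of "-\<i>" a]] by simp
qed

definition inv_sqrt2 :: complex where "inv_sqrt2 = of_real (sqrt (1/2))"

lemma inv_sqrt2_square: "inv_sqrt2 * inv_sqrt2 = 1/2"
  by (simp flip: of_real_mult add: inv_sqrt2_def)

lemma cnj_inv_sqrt2 [simp]: "cnj inv_sqrt2 = inv_sqrt2"
  by (simp add: inv_sqrt2_def)

definition hadamard_mat :: "'d \<Rightarrow> 'd \<Rightarrow> complex^'d^'d" where
  "hadamard_mat a b = (\<chi> i j.
      if i = a then (if j = a \<or> j = b then inv_sqrt2 else 0)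
      else if i = b then (if j = a then inv_sqrt2 else if j = b then -inv_sqrt2 else 0)
      else (if i = j then 1 else 0))"

definition hadamard_vec :: "'d \<Rightarrow> 'd \<Rightarrow> ('d \<Rightarrow> complex) \<Rightarrow> 'd \<Rightarrow> complex" where
  "hadamard_vec a b g i =
    (if i = a then inv_sqrt2 * (g a + g b) else if i = b then inv_sqrt2 * (g a - g b) else g i)"

lemma sum_two_points:
  fixes a b :: "'d::finite"
  assumes "a \<noteq> b"
  shows "(\<Sum>k\<in>UNIV. (if k = a then u else if k = b then v else 0) * g k) = u * g a + v * (g b :: complex)"
proof -
  have "(\<Sum>k\<in>UNIV. (if k = a then u else if k = b then v else 0) * g k)
      = (\<Sum>k\<in>UNIV. (if k = a then u * g a else 0) + (if k = b then v * g b else 0))"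
    using assms by (intro sum.cong) auto
  then show ?thesis by (simp add: sum.distrib)
qed

lemma hadamard_mat_row:
  fixes a b :: "'d::finite"
  assumes ab: "a \<noteq> b"
  shows "(\<Sum>k\<in>UNIV. hadamard_mat a b $ i $ k * g k) = hadamard_vec a b g i"
proof -
  consider "i = a" | "i = b" | "i \<noteq> a" "i \<noteq> b" by blast
  then show ?thesis
  proof cases
    case 1
    have "(\<Sum>k\<in>UNIV. hadamard_mat a b $ i $ k * g k)
        = (\<Sum>k\<in>UNIV. (if k = a then inv_sqrt2 else if k = b then inv_sqrt2 else 0) * g k)"
      using 1 ab by (intro sum.cong) (auto simp: hadamard_mat_def)
    then show ?thesis using 1 sum_two_points[OF ab] by (simp add: hadamard_vec_def algebra_simps)
  next
    case 2
    have "(\<Sum>k\<in>UNIV. hadamard_mat a b $ i $ k * g k)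
        = (\<Sum>k\<in>UNIV. (if k = a then inv_sqrt2 else if k = b then -inv_sqrt2 else 0) * g k)"
      using 2 ab by (intro sum.cong) (auto simp: hadamard_mat_def)
    then show ?thesis using 2 ab sum_two_points[OF ab] by (simp add: hadamard_vec_def algebra_simps)
  next
    case 3
    have "(\<Sum>k\<in>UNIV. hadamard_mat a b $ i $ k * g k) = (\<Sum>k\<in>UNIV. if k = i then g i else 0)"
      using 3 ab by (intro sum.cong) (auto simp: hadamard_mat_def)
    then show ?thesis using 3 by (simp add: hadamard_vec_def)
  qed
qed

lemma hadamard_mat_conj_nth:
  fixes a b :: "'d::finite"
  assumes ab: "a \<noteq> b"
  shows "(hadamard_mat a b ** X ** cdagger (hadamard_mat a b)) $ i $ j
    = hadamard_vec a b (\<lambda>l. hadamard_vec a b (\<lambda>k. X$k$l) i) j"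
proof -
  have cnj_entry: "cnj (hadamard_mat a b $ j $ k) = hadamard_mat a b $ j $ k" for j k
    by (auto simp: hadamard_mat_def)
  have left: "(hadamard_mat a b ** X) $ i $ l = hadamard_vec a b (\<lambda>k. X$k$l) i" for l
    using hadamard_mat_row[OF ab] by (simp add: matrix_matrix_mult_def)
  have "(hadamard_mat a b ** X ** cdagger (hadamard_mat a b)) $ i $ j
      = (\<Sum>l\<in>UNIV. hadamard_mat a b $ j $ l * (hadamard_mat a b ** X) $ i $ l)"
    by (simp add: matrix_matrix_mult_def cnj_entry mult.commute)
  also have "\<dots> = hadamard_vec a b (\<lambda>l. (hadamard_mat a b ** X) $ i $ l) j"
    by (rule hadamard_mat_row[OF ab])
  finally show ?thesis by (simp add: left)
qed

lemma unitary_hadamard_mat: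
  fixes a b :: "'d::finite"
  assumes ab: "a \<noteq> b"
  shows "unitary_mat (hadamard_mat a b)"
proof -
  have self_adjoint: "cdagger (hadamard_mat a b) = hadamard_mat a b"
    by (auto simp: vec_eq_iff hadamard_mat_def)
  have "(hadamard_mat a b ** hadamard_mat a b) $ i $ j = mat 1 $ i $ j" for i j
  proof -
    have "(hadamard_mat a b ** hadamard_mat a b) $ i $ j
        = hadamard_vec a b (\<lambda>k. hadamard_mat a b $ k $ j) i"
      using hadamard_mat_row[OF ab] by (simp add: matrix_matrix_mult_def)
    also have "\<dots> = mat 1 $ i $ j"
      using ab inv_sqrt2_square
      by (auto simp: hadamard_vec_def hadamard_mat_def mat_def algebra_simps)
    finally show ?thesis .
  qed
  then show ?thesis by (simp add: unitary_mat_def self_adjoint vec_eq_iff)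
qed

lemma rank_one_pauli_z:
  fixes a b :: "'d::finite"
  assumes "rank_one_map \<phi> (pauli_x a b) \<in> zerospanConj" "a \<noteq> b"
  shows "rank_one_map \<phi> (pauli_z a b) \<in> zerospanConj"
proof -
  have "inv_sqrt2 * (2 * inv_sqrt2) = 1"
    by (simp only: mult.left_commute[of inv_sqrt2 2] inv_sqrt2_square) simp
  then have "hadamard_mat a b ** pauli_x a b ** cdagger (hadamard_mat a b) = pauli_z a b"
    unfolding vec_eq_iff hadamard_mat_conj_nth[OF assms(2)]
    using assms(2) inv_sqrt2_square by (auto simp: hadamard_vec_def pauli_x_def pauli_z_def)
  then show ?thesis
    using rank_one_map_conj_left[OF assms(1) unitary_hadamard_mat[OF assms(2)]] by simp
qed

lemma rank_one_diag_functional: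
  fixes a b :: "'d::finite"
  assumes "rank_one_map (\<lambda>A. Re (A$a$b)) B \<in> zerospanConj" "a \<noteq> b"
  shows "rank_one_map (\<lambda>A. Re (A$a$a) - Re (A$b$b)) B \<in> zerospanConj"
proof -
  let ?H = "hadamard_mat a b"
  have "2 * Re ((?H ** A ** cdagger ?H)$a$b) = Re (A$a$a) - Re (A$b$b)" if A: "A \<in> tlherm" for A
  proof -
    have "(?H ** A ** cdagger ?H)$a$b = (inv_sqrt2 * inv_sqrt2) * (A$a$a + A$b$a - A$a$b - A$b$b)"
      unfolding hadamard_mat_conj_nth[OF assms(2)] using assms(2)
      by (simp add: hadamard_vec_def algebra_simps)
    then have "(?H ** A ** cdagger ?H)$a$b = 1/2 * (A$a$a + A$b$a - A$a$b - A$b$b)"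
      by (simp only: inv_sqrt2_square)
    then have "2 * Re ((?H ** A ** cdagger ?H)$a$b) = Re (A$a$a + A$b$a - A$a$b - A$b$b)"
      by (simp only:) simp
    then show ?thesis using tlherm_nth_cnj[OF A, of b a] by simp
  qed
  then have "rank_one_map (\<lambda>A. 2 * Re ((?H ** A ** cdagger ?H)$a$b)) B
      = rank_one_map (\<lambda>A. Re (A$a$a) - Re (A$b$b)) B"
    by (rule rank_one_map_cong)
  moreover have "rank_one_map (\<lambda>A. 2 * Re ((?H ** A ** cdagger ?H)$a$b)) B \<in> zerospanConj"
    using rank_one_map_conj_right[OF assms(1) unitary_hadamard_mat[OF assms(2)]]
    by (simp add: rank_one_map_scaleR_left zerospanConj_scaleR)
  ultimately show ?thesis by simp
qed

definition pauli_coords :: "'d \<Rightarrow> 'd \<Rightarrow> (complex^'d^'d \<Rightarrow> real) set" where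
  "pauli_coords a b = {\<lambda>A. Re (A$a$b), \<lambda>A. Im (A$a$b), \<lambda>A. Re (A$a$a) - Re (A$b$b)}"

lemma rank_one_pauli_in_zerospanConj:
  fixes a b c d :: "'d::finite"
  assumes "a \<noteq> b" "c \<noteq> d" "\<phi> \<in> pauli_coords a b"
  shows "rank_one_map \<phi> (pauli_x c d) \<in> zerospanConj"
    and "rank_one_map \<phi> (pauli_y c d) \<in> zerospanConj"
    and "rank_one_map \<phi> (pauli_z c d) \<in> zerospanConj"
proof -
  have re: "rank_one_map (\<lambda>A. Re (A$a$b)) (pauli_x a b) \<in> zerospanConj"
    by (rule rank_one_re_pauli_x[OF assms(1)])
  have "rank_one_map \<phi> (pauli_x a b) \<in> zerospanConj"
    using assms(3) re rank_one_im_functional[OF re assms(1)]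
      rank_one_diag_functional[OF re assms(1)]
    unfolding pauli_coords_def by auto
  then show x: "rank_one_map \<phi> (pauli_x c d) \<in> zerospanConj"
    by (rule rank_one_pauli_x_move[OF _ assms(1,2)])
  show "rank_one_map \<phi> (pauli_y c d) \<in> zerospanConj" by (rule rank_one_pauli_y[OF x assms(2)])
  show "rank_one_map \<phi> (pauli_z c d) \<in> zerospanConj" by (rule rank_one_pauli_z[OF x assms(2)])
qed

text \<open>Summed over all ordered pairs \<open>(a,b)\<close>, an off-diagonal entry of \<open>C\<close> is recovered from
  \<open>(a,b)\<close> and \<open>(b,a)\<close>, while the \<open>pauli_z\<close> terms add up to \<open>C\<^sub>x\<^sub>x - tr C / d\<close> at the diagonal
  entry \<open>x\<close>; this fixes the weights.\<close>

definition pauli_part :: "complex^'d^'d \<Rightarrow> 'd \<Rightarrow> 'd \<Rightarrow> complex^'d^'d" where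
  "pauli_part C a b = (if a = b then 0 else
     (1/2 * Re (C$a$b)) *\<^sub>R pauli_x a b + (1/2 * Im (C$a$b)) *\<^sub>R pauli_y a b
     + (1 / (2 * real CARD('d)) * (Re (C$a$a) - Re (C$b$b))) *\<^sub>R pauli_z a b)"

lemma pauli_part_tlherm: "pauli_part C a b \<in> tlherm"
  by (simp add: pauli_part_def tlherm_zero tlherm_add tlherm_scaleR
      pauli_x_tlherm pauli_y_tlherm pauli_z_tlherm)

lemma sum_pauli_part_offdiag:
  fixes C :: "complex^'d^'d"
  assumes C: "C \<in> tlherm" and xy: "x \<noteq> y"
  shows "(\<Sum>a\<in>UNIV. \<Sum>b\<in>UNIV. pauli_part C a b) $ x $ y = C $ x $ y"
proof -
  define u where "u = complex_of_real (1/2 * Re (C$x$y)) + \<i> * complex_of_real (1/2 * Im (C$x$y))"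
  define v where "v = complex_of_real (1/2 * Re (C$y$x)) - \<i> * complex_of_real (1/2 * Im (C$y$x))"
  have entry: "pauli_part C a b $ x $ y
      = (if a = x then (if b = y then u else 0) else 0)
        + (if a = y then (if b = x then v else 0) else 0)" for a b
    using xy by (auto simp: pauli_part_def pauli_x_def pauli_y_def pauli_z_def u_def v_def
        scaleR_conv_of_real[where 'a = complex])
  have pull_if: "(\<Sum>b\<in>UNIV. if P then g b else 0) = (if P then (\<Sum>b\<in>UNIV. g b) else 0)"
    for P and g :: "'d \<Rightarrow> complex"
    by simp
  have "(\<Sum>a\<in>UNIV. \<Sum>b\<in>UNIV. pauli_part C a b) $ x $ y = u + v"
    by (simp add: sum_component entry sum.distrib pull_if)
  also have "\<dots> = C $ x $ y"
    using tlherm_nth_cnj[OF C, of y x] by (simp add: u_def v_def complex_eq_iff)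
  finally show ?thesis .
qed

lemma sum_diff_mult_diff_delta:
  fixes R :: "'d::finite \<Rightarrow> real"
  shows "(\<Sum>a\<in>UNIV. \<Sum>b\<in>UNIV. (R a - R b) * ((if x = a then 1 else 0) - (if x = b then 1 else 0)))
     = 2 * real CARD('d) * R x - 2 * (\<Sum>a\<in>UNIV. R a)"
proof -
  have "(R a - R b) * ((if x = a then 1 else 0) - (if x = b then 1 else 0))
     = (if a = x then R x - R b else 0) - (if b = x then R a - R x else 0)" for a b
    by auto
  moreover have "(\<Sum>a\<in>UNIV. \<Sum>b\<in>UNIV. if a = x then R x - R b else 0) = (\<Sum>b\<in>UNIV. R x - R b)"
    by (subst sum.swap) simp
  ultimately show ?thesis by (simp add: sum_subtractf)
qed

lemma sum_pauli_part_diag: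
  fixes C :: "complex^'d^'d"
  assumes C: "C \<in> tlherm"
  shows "(\<Sum>a\<in>UNIV. \<Sum>b\<in>UNIV. pauli_part C a b) $ x $ x = C $ x $ x"
proof -
  define R where "R a = Re (C$a$a)" for a
  define k where "k = 1 / (2 * real CARD('d))"
  have entry: "pauli_part C a b $ x $ x
      = complex_of_real (k * ((R a - R b) * ((if x = a then 1 else 0) - (if x = b then 1 else 0))))"
    for a b
    by (auto simp: pauli_part_def pauli_x_def pauli_y_def pauli_z_def R_def k_def
        scaleR_conv_of_real[where 'a = complex] diff_divide_distrib)
  have "(\<Sum>a\<in>UNIV. R a) = Re (trace C)" by (simp add: R_def trace_def)
  then have traceless: "(\<Sum>a\<in>UNIV. R a) = 0" using C by (simp add: tlherm_def)
  have "(\<Sum>a\<in>UNIV. \<Sum>b\<in>UNIV. pauli_part C a b) $ x $ x = complex_of_real (k *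
      (\<Sum>a\<in>UNIV. \<Sum>b\<in>UNIV. (R a - R b) * ((if x = a then 1 else 0) - (if x = b then 1 else 0))))"
    by (simp add: sum_component entry sum_distrib_left)
  also have "\<dots> = complex_of_real (R x)"
    unfolding sum_diff_mult_diff_delta traceless by (simp add: k_def)
  also have "\<dots> = C $ x $ x"
    using tlherm_nth_cnj[OF C, of x x] by (simp add: R_def complex_eq_iff)
  finally show ?thesis .
qed

lemma tlherm_pauli_decomposition:
  "C \<in> tlherm \<Longrightarrow> C = (\<Sum>a\<in>UNIV. \<Sum>b\<in>UNIV. pauli_part C a b)"
  by (metis vec_eq_iff sum_pauli_part_diag sum_pauli_part_offdiag)

lemma rank_one_in_zerospanConj:
  fixes a b :: "'d::finite"
  assumes "a \<noteq> b" "\<phi> \<in> pauli_coords a b" "B \<in> tlherm"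
  shows "rank_one_map \<phi> B \<in> zerospanConj"
proof -
  have "rank_one_map \<phi> (pauli_part B c d) \<in> zerospanConj" for c d
  proof (cases "c = d")
    case True
    then show ?thesis by (simp add: pauli_part_def rank_one_map_zero zerospanConj_zero)
  next
    case False
    then show ?thesis
      using rank_one_pauli_in_zerospanConj[OF assms(1) False assms(2)]
      by (simp add: pauli_part_def rank_one_map_add rank_one_map_scaleR_right
          zerospanConj_add zerospanConj_scaleR)
  qed
  then have "(\<lambda>A. \<Sum>c\<in>UNIV. \<Sum>d\<in>UNIV. rank_one_map \<phi> (pauli_part B c d) A) \<in> zerospanConj"
    by (intro zerospanConj_sum) auto
  then show ?thesis
    by (subst tlherm_pauli_decomposition[OF assms(3)]) (simp add: rank_one_map_sum)
qed

lemma realLinMaps_pauli_part: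
  fixes L :: "complex^'d^'d \<Rightarrow> complex^'d^'d"
  assumes L: "L \<in> realLinMaps"
  shows "(\<lambda>A. if A \<in> tlherm then L (pauli_part A a b) else 0) \<in> zerospanConj"
proof (cases "a = b")
  case True
  then show ?thesis
    using realLinMaps_scaleR[OF L tlherm_zero, of 0] zerospanConj_zero
    by (simp add: pauli_part_def cong: if_cong)
next
  case False
  let ?c = "1 / (2 * real CARD('d))"
  have "(\<lambda>A. if A \<in> tlherm then L (pauli_part A a b) else 0)
      = (\<lambda>A. (1/2) *\<^sub>R rank_one_map (\<lambda>A. Re (A$a$b)) (L (pauli_x a b)) A
          + (1/2) *\<^sub>R rank_one_map (\<lambda>A. Im (A$a$b)) (L (pauli_y a b)) A
          + ?c *\<^sub>R rank_one_map (\<lambda>A. Re (A$a$a) - Re (A$b$b)) (L (pauli_z a b)) A)"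
    using False by (auto simp: fun_eq_iff pauli_part_def rank_one_map_def realLinMaps_add[OF L]
        realLinMaps_scaleR[OF L] tlherm_add tlherm_scaleR
        pauli_x_tlherm pauli_y_tlherm pauli_z_tlherm)
  moreover have "rank_one_map \<phi> (L B) \<in> zerospanConj"
    if "\<phi> \<in> pauli_coords a b" "B \<in> tlherm" for \<phi> B
    by (rule rank_one_in_zerospanConj[OF False that(1) realLinMaps_tlherm[OF L that(2)]])
  ultimately show ?thesis
    using False by (simp add: pauli_coords_def pauli_x_tlherm pauli_y_tlherm pauli_z_tlherm
        zerospanConj_add zerospanConj_scaleR)
qed

lemma realLinMaps_subset_zerospanConj: "realLinMaps \<subseteq> zerospanConj"
proof
  fix L :: "complex^'d^'d \<Rightarrow> complex^'d^'d"
  assume L: "L \<in> realLinMaps"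
  have "L = (\<lambda>A. \<Sum>a\<in>UNIV. \<Sum>b\<in>UNIV. if A \<in> tlherm then L (pauli_part A a b) else 0)"
  proof
    fix A
    show "L A = (\<Sum>a\<in>UNIV. \<Sum>b\<in>UNIV. if A \<in> tlherm then L (pauli_part A a b) else 0)"
    proof (cases "A \<in> tlherm")
      case True
      then have "L A = L (\<Sum>a\<in>UNIV. \<Sum>b\<in>UNIV. pauli_part A a b)"
        by (metis tlherm_pauli_decomposition)
      then show ?thesis
        using True by (simp add: realLinMaps_sum[OF L] pauli_part_tlherm tlherm_sum)
    qed (simp add: realLinMaps_outside[OF L])
  qed
  moreover have "(\<lambda>A. \<Sum>a\<in>UNIV. \<Sum>b\<in>UNIV. if A \<in> tlherm then L (pauli_part A a b) else 0)
      \<in> zerospanConj"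
    using realLinMaps_pauli_part[OF L] by (intro zerospanConj_sum) auto
  ultimately show "L \<in> zerospanConj" by simp
qed

theorem proposition1:
  shows "(zerospanConj :: ((complex^'d^'d) \<Rightarrow> (complex^'d^'d)) set) = realLinMaps"
  using zerospanConj_subset_realLinMaps realLinMaps_subset_zerospanConj by blast

end
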